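(* Let $F_3=|0\rangle\langle0|\otimes I_2\otimes I_2+|1\rangle\langle1|\otimes\mathrm{SWAP}$ be the Fredkin gate and $U_5=(T_{AB}\otimes I_2)F_3=|0\rangle\langle0|\otimes I_2\otimes I_2+|1\rangle\langle1|\otimes(\sigma_1\otimes I_2)\,\mathrm{SWAP}$. Then $\mathrm{sr}(U_5)=5$.
   Context: $I_2$ is the $2\times 2$ identity, $\sigma_1=\begin{bmatrix}0&1\\1&0\end{bmatrix}$, $\{|0\rangle,|1\rangle\}$ is the standard basis of $\mathbb{C}^2$, and $\mathrm{SWAP}|b,c\rangle=|c,b\rangle$ on $\mathbb{C}^2\otimes\mathbb{C}^2$. $T=|0\rangle\langle0|\otimes I_2+|1\rangle\langle1|\otimes\sigma_1$ is the CNOT gate; $T_{AB}$ denotes $T$ with control qubit $A$ and target $B$. For a matrix $U$ on $\mathbb{C}^2\otimes\mathbb{C}^2\otimes\mathbb{C}^2$ (systems $A,B,C$), its Schmidt rank $\mathrm{sr}(U)$ is the least integer $r$ such that $U=\sum_{j=1}^r A_j\otimes B_j\otimes C_j$ with $A_j,B_j,C_j$ complex $2\times 2$ matrices (i.e. the tensor rank of $U$). *)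

theory Defs
  imports Complex_Main
begin

text \<open>Qubit basis index: False = |0>, True = |1>.
  A 2x2 matrix is a function bool => bool => complex (row index, column index);
  a matrix on C^2 (x) C^2 is indexed by bool*bool, on C^2 (x) C^2 (x) C^2 by bool*bool*bool
  (systems A,B,C in this order).\<close>

type_synonym mat1 = "bool \<Rightarrow> bool \<Rightarrow> complex"
type_synonym mat2 = "bool \<times> bool \<Rightarrow> bool \<times> bool \<Rightarrow> complex"
type_synonym mat3 = "bool \<times> bool \<times> bool \<Rightarrow> bool \<times> bool \<times> bool \<Rightarrow> complex"

definition I2 :: mat1 where "I2 a b = (if a = b then 1 else 0)"
definition sigma1 :: mat1 where "sigma1 a b = (if a \<noteq> b then 1 else 0)"
definition P0 :: mat1 where "P0 a b = (if \<not> a \<and> \<not> b then 1 else 0)"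
definition P1 :: mat1 where "P1 a b = (if a \<and> b then 1 else 0)"

definition kron11 :: "mat1 \<Rightarrow> mat1 \<Rightarrow> mat2" where
  "kron11 A B = (\<lambda>(a,b) (a',b'). A a a' * B b b')"

definition kron12 :: "mat1 \<Rightarrow> mat2 \<Rightarrow> mat3" where
  "kron12 A M = (\<lambda>(a,b,c) (a',b',c'). A a a' * M (b,c) (b',c'))"

definition kron21 :: "mat2 \<Rightarrow> mat1 \<Rightarrow> mat3" where
  "kron21 M C = (\<lambda>(a,b,c) (a',b',c'). M (a,b) (a',b') * C c c')"

definition kron111 :: "mat1 \<Rightarrow> mat1 \<Rightarrow> mat1 \<Rightarrow> mat3" where
  "kron111 A B C = (\<lambda>(a,b,c) (a',b',c'). A a a' * B b b' * C c c')"

definition mult2 :: "mat2 \<Rightarrow> mat2 \<Rightarrow> mat2" where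
  "mult2 U V = (\<lambda>x z. \<Sum>y\<in>UNIV. U x y * V y z)"

definition mult3 :: "mat3 \<Rightarrow> mat3 \<Rightarrow> mat3" where
  "mult3 U V = (\<lambda>x z. \<Sum>y\<in>UNIV. U x y * V y z)"

definition SWAP :: mat2 where
  "SWAP = (\<lambda>(b,c) (b',c'). if b = c' \<and> c = b' then 1 else 0)"

definition CNOT :: mat2 where
  "CNOT = (\<lambda>x y. kron11 P0 I2 x y + kron11 P1 sigma1 x y)"

definition Fredkin :: mat3 where
  "Fredkin = (\<lambda>x y. kron12 P0 (kron11 I2 I2) x y + kron12 P1 SWAP x y)"

definition U5 :: mat3 where
  "U5 = mult3 (kron21 CNOT I2) Fredkin"

definition schmidt_rank :: "mat3 \<Rightarrow> nat" where
  "schmidt_rank U = (LEAST r. \<exists>A B C :: nat \<Rightarrow> mat1.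
      U = (\<lambda>x y. \<Sum>j<r. kron111 (A j) (B j) (C j) x y))"

end

theory Submission
  imports Defs "HOL-Analysis.Analysis"
begin

text \<open>
  Slicing a decomposition \<open>U5 = \<Sum>j<r. A\<^sub>j \<otimes> B\<^sub>j \<otimes> C\<^sub>j\<close> along the control qubit gives decompositions
  \<open>\<Sum>j<r. A\<^sub>j(a,a) B\<^sub>j \<otimes> C\<^sub>j\<close> of the two diagonal blocks \<open>I \<otimes> I\<close> and \<open>X = (\<sigma>\<^sub>1 \<otimes> I) SWAP\<close>.
  Choosing \<open>\<mu>\<close> so that one coefficient \<open>A\<^sub>j(1,1) - \<mu> A\<^sub>j(0,0)\<close> vanishes writes \<open>X - \<mu> I \<otimes> I\<close> as a
  sum of \<open>r - 1\<close> product operators. The realignment of a sum of \<open>k\<close> product operators is a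
  \<open>4 \<times> 4\<close> matrix of rank at most \<open>k\<close>, whereas the realignment of \<open>X - \<mu> I \<otimes> I\<close> is invertible for
  every \<open>\<mu>\<close>; hence \<open>r - 1 \<ge> 4\<close>. An explicit five-term decomposition gives the upper bound.
\<close>

definition slice :: "mat3 \<Rightarrow> bool \<Rightarrow> bool \<Rightarrow> mat2" where
  "slice U a a' = (\<lambda>(b, c) (b', c'). U (a, b, c) (a', b', c'))"

text \<open>Realignment sends the entry \<open>\<langle>b c|M|b' c'\<rangle>\<close> to row \<open>(b, b')\<close> and column \<open>(c, c')\<close>, so
  that \<open>kron11 B C\<close> becomes the rank-one matrix \<open>flatten B \<cdot> flatten C\<^sup>T\<close>.\<close>

definition realign :: "mat2 \<Rightarrow> complex^(bool \<times> bool)^(bool \<times> bool)" where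
  "realign M = (\<chi> i j. M (fst i, fst j) (snd i, snd j))"

definition flatten :: "mat1 \<Rightarrow> complex^(bool \<times> bool)" where
  "flatten C = (\<chi> j. C (fst j) (snd j))"

lemma slice_sum_kron111:
  "slice (\<lambda>x y. \<Sum>j\<in>J. kron111 (A j) (B j) (C j) x y) a a'
     = (\<lambda>x y. \<Sum>j\<in>J. A j a a' * kron11 (B j) (C j) x y)"
  by (auto simp: slice_def kron111_def kron11_def fun_eq_iff mult.assoc)

lemma row_realign_sum_kron11:
  "row i (realign (\<lambda>x y. \<Sum>j\<in>J. kron11 (B j) (C j) x y))
     = (\<Sum>j\<in>J. B j (fst i) (snd i) *s flatten (C j))"
  by (simp add: row_def realign_def flatten_def kron11_def vec_eq_iff)

lemma det_realign_sum_kron11_eq_0: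
  fixes B C :: "'i \<Rightarrow> mat1"
  assumes "finite J" and "card J < 4"
  shows "det (realign (\<lambda>x y. \<Sum>j\<in>J. kron11 (B j) (C j) x y)) = 0"
    (is "det ?R = 0")
proof (cases "inj (\<lambda>i. row i ?R)")
  case True
  have "rows ?R \<subseteq> vec.span (flatten ` C ` J)"
    unfolding rows_def row_realign_sum_kron11
    by (auto intro!: vec.span_sum intro: vec.span_scale vec.span_base)
  moreover have "card (rows ?R) = 4"
  proof -
    have "rows ?R = range (\<lambda>i. row i ?R)"
      by (auto simp: rows_def)
    then show ?thesis
      using True by (simp add: card_image)
  qed
  moreover have "card (flatten ` C ` J) < 4"
    using assms by (meson card_image_le finite_imageI le_less_trans)
  ultimately have "vec.dependent (rows ?R)"
    using vec.independent_span_bound[of "flatten ` C ` J" "rows ?R"] assms(1) by fastforce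
  then show ?thesis
    by (rule det_dependent_rows)
next
  case False
  then obtain i i' where "i \<noteq> i'" "row i ?R = row i' ?R"
    unfolding inj_def by blast
  then show ?thesis
    by (rule det_identical_rows)
qed

lemma five_le_length_of_kron111_decomposition:
  fixes U :: mat3 and A B C :: "nat \<Rightarrow> mat1"
  assumes U: "U = (\<lambda>x y. \<Sum>j<r. kron111 (A j) (B j) (C j) x y)"
    and slice_nonzero: "slice U a a' \<noteq> (\<lambda>_ _. 0)"
    and pencil_invertible:
      "\<And>\<mu>. det (realign (\<lambda>x y. slice U b b' x y - \<mu> * slice U a a' x y)) \<noteq> 0"
  shows "5 \<le> r"
proof -
  have slices: "slice U p p' = (\<lambda>x y. \<Sum>j<r. A j p p' * kron11 (B j) (C j) x y)" for p p'
    unfolding U slice_sum_kron111 ..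
  have "\<exists>j<r. A j a a' \<noteq> 0"
  proof (rule ccontr)
    assume "\<not> (\<exists>j<r. A j a a' \<noteq> 0)"
    then have "slice U a a' = (\<lambda>_ _. 0)"
      by (simp add: slices)
    with slice_nonzero show False ..
  qed
  then obtain j0 where j0: "j0 < r" "A j0 a a' \<noteq> 0"
    by blast
  define \<mu> where "\<mu> = A j0 b b' / A j0 a a'"
  define B' where "B' j = (\<lambda>p q. (A j b b' - \<mu> * A j a a') * B j p q)" for j
  have "(\<lambda>x y. slice U b b' x y - \<mu> * slice U a a' x y)
      = (\<lambda>x y. \<Sum>j<r. (A j b b' - \<mu> * A j a a') * kron11 (B j) (C j) x y)"
    by (simp add: slices fun_eq_iff sum_distrib_left sum_subtractf left_diff_distrib mult.assoc)
  also have "\<dots> = (\<lambda>x y. \<Sum>j<r. kron11 (B' j) (C j) x y)"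
  proof -
    have "(A j b b' - \<mu> * A j a a') * kron11 (B j) (C j) x y = kron11 (B' j) (C j) x y" for j x y
      by (cases x; cases y) (simp add: B'_def kron11_def)
    then show ?thesis
      by simp
  qed
  also have "\<dots> = (\<lambda>x y. \<Sum>j\<in>{..<r} - {j0}. kron11 (B' j) (C j) x y)"
  proof -
    have "kron11 (B' j0) (C j0) x y = 0" for x y
      using j0(2) by (cases x; cases y) (simp add: B'_def \<mu>_def kron11_def)
    then show ?thesis
      using j0(1) by (simp add: sum.remove)
  qed
  finally have "det (realign (\<lambda>x y. \<Sum>j\<in>{..<r} - {j0}. kron11 (B' j) (C j) x y)) \<noteq> 0"
    using pencil_invertible[of \<mu>] by simp
  then have "\<not> card ({..<r} - {j0}) < 4"
    using det_realign_sum_kron11_eq_0[of "{..<r} - {j0}"] by blast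
  then show ?thesis
    using j0 by simp
qed

lemma sum_UNIV_prod:
  "(\<Sum>y\<in>UNIV. f y) = (\<Sum>a\<in>UNIV. \<Sum>b\<in>UNIV. f (a, b))"
  by (simp add: sum.cartesian_product)

definition flip_swap :: mat2 where
  "flip_swap = mult2 (kron11 sigma1 I2) SWAP"

lemma flip_swap_apply:
  "flip_swap (b, c) (b', c') = (if b = (\<not> c') \<and> c = b' then 1 else 0)"
  by (cases b; cases c; cases b'; cases c';
      simp add: flip_swap_def mult2_def sum_UNIV_prod UNIV_bool kron11_def sigma1_def I2_def SWAP_def)

lemma U5_eq:
  "U5 = (\<lambda>x y. kron12 P0 (kron11 I2 I2) x y + kron12 P1 flip_swap x y)"
proof (intro ext)
  fix x y :: "bool \<times> bool \<times> bool"
  obtain a b c a' b' c' where "x = (a, b, c)" "y = (a', b', c')"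
    by (cases x; cases y) auto
  then show "U5 x y = kron12 P0 (kron11 I2 I2) x y + kron12 P1 flip_swap x y"
    by (cases a; cases b; cases c; cases a'; cases b'; cases c';
        simp add: U5_def mult3_def sum_UNIV_prod UNIV_bool flip_swap_apply
          kron21_def CNOT_def kron11_def Fredkin_def kron12_def P0_def P1_def I2_def sigma1_def SWAP_def)
qed

lemma slice_U5_False: "slice U5 False False = kron11 I2 I2"
  by (auto simp: fun_eq_iff slice_def U5_eq kron12_def P0_def P1_def)

lemma slice_U5_True: "slice U5 True True = flip_swap"
  by (auto simp: fun_eq_iff slice_def U5_eq kron12_def P0_def P1_def)

lemma det_realign_flip_swap_pencil_nonzero:
  "det (realign (\<lambda>x y. flip_swap x y - \<mu> * kron11 I2 I2 x y)) \<noteq> 0"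
proof -
  \<comment> \<open>Sherman--Morrison: the realignment is \<open>P - \<mu> u u\<^sup>T\<close> with \<open>P\<close> a permutation matrix,
    \<open>u = flatten I2\<close> and \<open>u\<^sup>T P\<^sup>T u = 0\<close>, so its inverse is \<open>P\<^sup>T + \<mu> P\<^sup>T u u\<^sup>T P\<^sup>T\<close>.\<close>
  define Z :: "complex^(bool \<times> bool)^(bool \<times> bool)" where
    "Z = (\<chi> i j. (if fst j = (\<not> snd i) \<and> fst i = snd j then 1 else 0)
                 + \<mu> * (if fst i \<noteq> snd i \<and> fst j \<noteq> snd j then 1 else 0))"
  have R: "realign (\<lambda>x y. flip_swap x y - \<mu> * kron11 I2 I2 x y) $ i $ j
      = (if fst i = (\<not> snd j) \<and> fst j = snd i then 1 else 0)
        - \<mu> * (if fst i = snd i \<and> fst j = snd j then 1 else 0)" for i j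
    by (simp add: realign_def flip_swap_apply kron11_def I2_def)
  have "realign (\<lambda>x y. flip_swap x y - \<mu> * kron11 I2 I2 x y) ** Z = mat 1" (is "?R ** Z = _")
    unfolding matrix_matrix_mult_def mat_def vec_eq_iff
    by (simp add: R Z_def sum_UNIV_prod UNIV_bool split_paired_All)
  then have "det ?R * det Z = 1"
    by (simp add: det_mul[symmetric])
  then show ?thesis
    by auto
qed

definition matrix_unit :: "bool \<Rightarrow> bool \<Rightarrow> mat1" where
  "matrix_unit p q = (\<lambda>a b. if a = p \<and> b = q then 1 else 0)"

text \<open>The witness is \<open>U5 = P0 \<otimes> I \<otimes> I + \<Sum>p q. P1 \<otimes> |\<not>q\<rangle>\<langle>p| \<otimes> |p\<rangle>\<langle>q|\<close>, the four pairs
  \<open>(p, q) = (3 \<le> j, even j)\<close> being enumerated by \<open>j = 1, \<dots>, 4\<close>.\<close>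

lemma U5_five_term_decomposition:
  "\<exists>A B C :: nat \<Rightarrow> mat1. U5 = (\<lambda>x y. \<Sum>j<5. kron111 (A j) (B j) (C j) x y)"
proof (intro exI ext)
  fix x y :: "bool \<times> bool \<times> bool"
  obtain a b c a' b' c' where xy: "x = (a, b, c)" "y = (a', b', c')"
    by (cases x; cases y) auto
  show "U5 x y = (\<Sum>j::nat<5. kron111 (if j = 0 then P0 else P1)
      (if j = 0 then I2 else matrix_unit (odd j) (3 \<le> j))
      (if j = 0 then I2 else matrix_unit (3 \<le> j) (even j)) x y)"
    unfolding xy
    by (cases a; cases b; cases c; cases a'; cases b'; cases c';
        simp add: U5_eq flip_swap_apply lessThan_nat_numeral kron111_def kron12_def kron11_def
          matrix_unit_def P0_def P1_def I2_def)
qed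

theorem mainTheorem15:
  shows "schmidt_rank U5 = 5"
  unfolding schmidt_rank_def
proof (rule Least_equality)
  show "\<exists>A B C :: nat \<Rightarrow> mat1. U5 = (\<lambda>x y. \<Sum>j<5. kron111 (A j) (B j) (C j) x y)"
    by (rule U5_five_term_decomposition)
next
  fix r
  assume "\<exists>A B C :: nat \<Rightarrow> mat1. U5 = (\<lambda>x y. \<Sum>j<r. kron111 (A j) (B j) (C j) x y)"
  then obtain A B C :: "nat \<Rightarrow> mat1"
    where decomposition: "U5 = (\<lambda>x y. \<Sum>j<r. kron111 (A j) (B j) (C j) x y)"
    by blast
  have "kron11 I2 I2 \<noteq> (\<lambda>_ _. 0)"
    by (auto simp: fun_eq_iff kron11_def I2_def)
  then show "5 \<le> r"
    using det_realign_flip_swap_pencil_nonzero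
    by (intro five_le_length_of_kron111_decomposition
        [where a = False and a' = False and b = True and b' = True, OF decomposition])
      (simp_all add: slice_U5_False slice_U5_True)
qed

end
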